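(* Let $\omega\in\mathbb{F}_8$ be a root of $y^3+y+1$, let $m\in\mathbb{N}$, and let $L,M,N$ be nonempty subsets of $[m]$, at least one of which is a proper subset of $[m]$. Let $D=\Delta_L+\omega\Delta_M+\omega^2\Delta_N\subseteq\mathbb{F}_8^m$, $D^c=\mathbb{F}_8^m\setminus D$, and $s=|L|+|M|+|N|$. Then the binary code $C^{(2)}_{D^c}=\{((\alpha,\beta,\gamma)\cdot x)_{x\in(D^c)^{(2)}}:\alpha,\beta,\gamma\in\mathbb{F}_2^m\}$, where $(D^c)^{(2)}=\{(a,c,b)\in(\mathbb{F}_2^m)^3: a+\omega b+\omega^2c\in D^c\}$, is a $[2^{3m}-2^s,\,3m,\,2^{3m-1}-2^{s-1}]$ binary $2$-weight linear code with weight distribution: $1$ codeword of weight $0$, $2^{3m-s}(2^s-1)$ codewords of weight $2^{3m-1}-2^{s-1}$, and $2^{3m-s}-1$ codewords of weight $2^{3m-1}$. Moreover, it is a Griesmer code and hence distance optimal. Further, if $s\le 3m-2$ then $C^{(2)}_{D^c}$ is a minimal code.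
   Context: $[m]=\{1,\dots,m\}$; $\Delta_L=\{w\in\mathbb{F}_2^m:\{i:w_i\ne0\}\subseteq L\}$; $A+\omega B+\omega^2C=\{a+\omega b+\omega^2c: a\in A,b\in B,c\in C\}$. (This code is the subfield code, with respect to the basis $\{1,\omega,\omega^2\}$, of the octanary code $C_{D^c}=\{(v\cdot d)_{d\in D^c}:v\in\mathbb{F}_8^m\}$.) A $2$-weight code has exactly two distinct nonzero Hamming weights. An $[n,k,d]$ code over $\mathbb{F}_q$ is Griesmer if $\sum_{i=0}^{k-1}\lceil d/q^i\rceil=n$, distance optimal if no $[n,k,d+1]$ linear code exists, and minimal if for every nonzero codeword $c$, each nonzero codeword $c'$ with $\mathrm{Supp}(c')\subseteq\mathrm{Supp}(c)$ is a scalar multiple of $c$. *)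

theory Defs
  imports Complex_Main "HOL-Library.Z2"
begin

definition vecs :: "'i set \<Rightarrow> ('i \<Rightarrow> 'f::field) set" where
  "vecs X = {v. \<forall>x. x \<notin> X \<longrightarrow> v x = 0}"

definition supp :: "('i \<Rightarrow> 'f::field) \<Rightarrow> 'i set" where
  "supp v = {x. v x \<noteq> 0}"

definition hw :: "('i \<Rightarrow> 'f::field) \<Rightarrow> nat" where
  "hw v = card (supp v)"

definition linear_code :: "'i set \<Rightarrow> ('i \<Rightarrow> 'f::field) set \<Rightarrow> bool" where
  "linear_code X C \<longleftrightarrow> finite X \<and> C \<subseteq> vecs X \<and> (\<lambda>x. 0) \<in> C
     \<and> (\<forall>u\<in>C. \<forall>v\<in>C. (\<lambda>x. u x + v x) \<in> C)
     \<and> (\<forall>a. \<forall>u\<in>C. (\<lambda>x. a * u x) \<in> C)"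

text \<open>[n,k,d] linear code over the (finite) field F: length n = |X|, dimension k
  (a subspace of dimension k has exactly |F|^k elements), minimum distance d.\<close>
definition nkd_code :: "'i set \<Rightarrow> ('i \<Rightarrow> 'f::field) set \<Rightarrow> nat \<Rightarrow> nat \<Rightarrow> nat \<Rightarrow> bool" where
  "nkd_code X C n k d \<longleftrightarrow> linear_code X C \<and> card X = n
     \<and> card C = card (UNIV :: 'f set) ^ k
     \<and> (\<exists>c\<in>C. c \<noteq> (\<lambda>x. 0) \<and> hw c = d)
     \<and> (\<forall>c\<in>C. c \<noteq> (\<lambda>x. 0) \<longrightarrow> d \<le> hw c)"

definition two_weight_code :: "('i \<Rightarrow> 'f::field) set \<Rightarrow> bool" where
  "two_weight_code C \<longleftrightarrow> card {hw c | c. c \<in> C \<and> c \<noteq> (\<lambda>x. 0)} = 2"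

definition griesmer_code :: "'i set \<Rightarrow> ('i \<Rightarrow> 'f::field) set \<Rightarrow> bool" where
  "griesmer_code X C \<longleftrightarrow> (\<exists>n k d. nkd_code X C n k d \<and>
      (\<Sum>i<k. \<lceil>real d / real (card (UNIV :: 'f set)) ^ i\<rceil>) = int n)"

definition distance_optimal :: "'i set \<Rightarrow> ('i \<Rightarrow> 'f::field) set \<Rightarrow> bool" where
  "distance_optimal X C \<longleftrightarrow> (\<exists>n k d. nkd_code X C n k d \<and>
      \<not> (\<exists>C' :: (nat \<Rightarrow> 'f) set. nkd_code {..<n} C' n k (d + 1)))"

definition minimal_code :: "('i \<Rightarrow> 'f::field) set \<Rightarrow> bool" where
  "minimal_code C \<longleftrightarrow> (\<forall>c\<in>C. c \<noteq> (\<lambda>x. 0) \<longrightarrow>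
      (\<forall>c'\<in>C. c' \<noteq> (\<lambda>x. 0) \<and> supp c' \<subseteq> supp c \<longrightarrow> (\<exists>a. c' = (\<lambda>x. a * c x))))"

definition F2vec :: "nat \<Rightarrow> (nat \<Rightarrow> bit) set" where
  "F2vec m = {w. \<forall>i. i \<notin> {1..m} \<longrightarrow> w i = 0}"

definition Fvec :: "nat \<Rightarrow> (nat \<Rightarrow> 'a::field) set" where
  "Fvec m = {w. \<forall>i. i \<notin> {1..m} \<longrightarrow> w i = 0}"

definition Delta :: "nat \<Rightarrow> nat set \<Rightarrow> (nat \<Rightarrow> bit) set" where
  "Delta m L = {w \<in> F2vec m. {i. w i \<noteq> 0} \<subseteq> L}"

definition comb :: "'a::field \<Rightarrow> (nat \<Rightarrow> bit) \<Rightarrow> (nat \<Rightarrow> bit) \<Rightarrow> (nat \<Rightarrow> bit) \<Rightarrow> (nat \<Rightarrow> 'a)" where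
  "comb \<omega> a b c = (\<lambda>i. of_bit (a i) + \<omega> * of_bit (b i) + \<omega>^2 * of_bit (c i))"

definition Dset :: "'a::field \<Rightarrow> nat \<Rightarrow> nat set \<Rightarrow> nat set \<Rightarrow> nat set \<Rightarrow> (nat \<Rightarrow> 'a) set" where
  "Dset \<omega> m L M N = {comb \<omega> a b c | a b c. a \<in> Delta m L \<and> b \<in> Delta m M \<and> c \<in> Delta m N}"

definition Dcomp :: "'a::field \<Rightarrow> nat \<Rightarrow> nat set \<Rightarrow> nat set \<Rightarrow> nat set \<Rightarrow> (nat \<Rightarrow> 'a) set" where
  "Dcomp \<omega> m L M N = Fvec m - Dset \<omega> m L M N"

definition Dcomp2 :: "'a::field \<Rightarrow> nat \<Rightarrow> nat set \<Rightarrow> nat set \<Rightarrow> nat set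
    \<Rightarrow> ((nat \<Rightarrow> bit) \<times> (nat \<Rightarrow> bit) \<times> (nat \<Rightarrow> bit)) set" where
  "Dcomp2 \<omega> m L M N = {(a, c, b) | a b c. a \<in> F2vec m \<and> b \<in> F2vec m \<and> c \<in> F2vec m
       \<and> comb \<omega> a b c \<in> Dcomp \<omega> m L M N}"

definition dot3 :: "nat \<Rightarrow> (nat \<Rightarrow> bit) \<times> (nat \<Rightarrow> bit) \<times> (nat \<Rightarrow> bit)
    \<Rightarrow> (nat \<Rightarrow> bit) \<times> (nat \<Rightarrow> bit) \<times> (nat \<Rightarrow> bit) \<Rightarrow> bit" where
  "dot3 m u x = (case u of (\<alpha>, \<beta>, \<gamma>) \<Rightarrow> case x of (x1, x2, x3) \<Rightarrow>
      (\<Sum>i\<in>{1..m}. \<alpha> i * x1 i + \<beta> i * x2 i + \<gamma> i * x3 i))"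

definition code2 :: "'a::field \<Rightarrow> nat \<Rightarrow> nat set \<Rightarrow> nat set \<Rightarrow> nat set
    \<Rightarrow> (((nat \<Rightarrow> bit) \<times> (nat \<Rightarrow> bit) \<times> (nat \<Rightarrow> bit)) \<Rightarrow> bit) set" where
  "code2 \<omega> m L M N = {(\<lambda>x. if x \<in> Dcomp2 \<omega> m L M N then dot3 m (\<alpha>, \<beta>, \<gamma>) x else 0)
       | \<alpha> \<beta> \<gamma>. \<alpha> \<in> F2vec m \<and> \<beta> \<in> F2vec m \<and> \<gamma> \<in> F2vec m}"

end

theory Submission
  imports Defs "HOL-Library.FuncSet" "HOL-Library.Function_Algebras" "HOL-Library.Product_Plus"
    "HOL-Number_Theory.Residues"
begin

text \<open>
  Since 1, \<omega>, \<omega>^2 are linearly independent over F_2, the index set (D^c)^(2) is V - W,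
  where V = (F_2^m)^3 and W = \<Delta>_L \<times> \<Delta>_N \<times> \<Delta>_M is a subgroup of order 2^s.
  So the codeword of u \<in> V has weight |{x \<in> V. u\<cdot>x = 1}| - |{x \<in> W. u\<cdot>x = 1}|.
  A linear form that does not vanish on a finite F_2-space takes the value 1 on exactly half of
  it, and x \<mapsto> u\<cdot>x vanishes on W exactly when u lies in the annihilator of W, which is the
  product of the \<Delta>'s of the complements of L, N, M and has order 2^(3m-s). Hence the nonzero
  weights are 2^(3m-1) on the annihilator and 2^(3m-1) - 2^(s-1) off it, and u \<mapsto> c_u is
  injective. The Griesmer sum is a direct computation, distance optimality follows from the
  Plotkin bound, and minimality from the criterion w_max < 2 w_min of Ashikhmin and Barg.
\<close>

declare add_bit_eq_xor [simp del] mult_bit_eq_and [simp del]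
  \<comment> \<open>otherwise sums and products of bits are rewritten into XOR and AND\<close>

section \<open>Fields of characteristic two\<close>

lemma two_eq_zero_if_card_eq_power_of_two:
  assumes "card (UNIV :: 'a::{field,finite} set) = 2 ^ k"
  shows "(2::'a) = 0"
proof -
  have "(of_nat (card (UNIV :: 'a set)) :: 'a) = 0"
    by (simp add: of_nat_eq_0_iff_char_dvd CHAR_dvd_CARD)
  then have "(2::'a) ^ k = 0" using assms by simp
  then show ?thesis by simp
qed

lemma char2_add_eq_0_iff:
  fixes x y :: "'a::ring_1"
  assumes "(2::'a) = 0"
  shows "x + y = 0 \<longleftrightarrow> x = y"
proof -
  have "y + y = 2 * y" by (rule mult_2[symmetric])
  also have "\<dots> = 0" using assms by simp
  finally show ?thesis by (metis add_right_cancel)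
qed

lemma of_bit_add:
  assumes "(2::'a::field) = 0"
  shows "(of_bit (x + y) :: 'a) = of_bit x + of_bit y"
  using assms by (cases x; cases y) auto

lemma F2_independent_root_powers:
  fixes \<omega> :: "'a::field"
  assumes char2: "(2::'a) = 0" and root: "\<omega>^3 + \<omega> + 1 = 0"
    and zero: "of_bit p + \<omega> * of_bit q + \<omega>^2 * of_bit r = (0::'a)"
  shows "p = 0 \<and> q = 0 \<and> r = 0"
proof -
  note add_eq_0_iff = char2_add_eq_0_iff[OF char2]
  have cube: "\<omega>^3 = \<omega> * \<omega>^2" by (simp add: power2_eq_square power3_eq_cube)
  have \<omega>_ne_0: "\<omega> \<noteq> 0" using root by auto
  have one_ne_\<omega>: "1 \<noteq> \<omega>" using root char2 by (auto simp: numeral_eq_Suc)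
  have one_ne_sq: "1 \<noteq> \<omega>^2"
  proof
    assume "1 = \<omega>^2"
    then have "\<omega> + \<omega> + 1 = 0" using root cube by simp
    then show False using char2 by (simp flip: mult_2)
  qed
  have \<omega>_ne_sq: "\<omega> \<noteq> \<omega>^2"
    using \<omega>_ne_0 one_ne_\<omega> by (simp add: power2_eq_square)
  have one_plus_\<omega>_ne_sq: "1 + \<omega> \<noteq> \<omega>^2"
  proof
    assume sq: "1 + \<omega> = \<omega>^2"
    have "\<omega>^3 = \<omega> + (1 + \<omega>)"
      using cube sq[symmetric] by (simp add: algebra_simps power2_eq_square)
    also have "\<dots> = 1"
      using add_eq_0_iff[of \<omega> \<omega>] by (simp add: algebra_simps)
    finally have "\<omega>^3 = 1" .
    then show False using root char2 \<omega>_ne_0 by (simp add: add.commute add.left_commute)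
  qed
  show ?thesis
  proof (cases p; cases q; cases r)
  qed (use zero \<omega>_ne_0 one_ne_\<omega> one_ne_sq \<omega>_ne_sq one_plus_\<omega>_ne_sq
      in \<open>simp_all add: add_eq_0_iff\<close>)
qed

section \<open>Counting\<close>

lemma card_level_set_half:
  fixes f :: "'a::ab_group_add \<Rightarrow> bit"
  assumes "finite S" and diff_closed: "\<And>x y. x \<in> S \<Longrightarrow> y \<in> S \<Longrightarrow> x - y \<in> S"
    and additive: "\<And>x y. f (x + y) = f x + f y"
    and a: "a \<in> S" "f a = 1"
  shows "2 * card {x\<in>S. f x = 1} = card S"
proof -
  have add_closed: "x + a \<in> S" if "x \<in> S" for x
    \<comment> \<open>as \<open>x + a = x - ((a - a) - a)\<close>\<close>
    using diff_closed[OF that diff_closed[OF diff_closed[OF a(1) a(1)] a(1)]] by simp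
  have shift: "f (x + a) = f x + 1" for x
    using additive a(2) by simp
  have shift_back: "f (x - a) = f x + 1" for x
  proof -
    have "f x = f (x - a) + 1" using shift[of "x - a"] by simp
    then show ?thesis by (simp add: add.assoc)
  qed
  have "bij_betw (\<lambda>x. x + a) {x\<in>S. f x = 0} {x\<in>S. f x = 1}"
    by (rule bij_betw_byWitness[where f' = "\<lambda>x. x - a"])
      (auto simp: add_closed diff_closed a shift shift_back)
  then have "card {x\<in>S. f x = 0} = card {x\<in>S. f x = 1}"
    by (rule bij_betw_same_card)
  moreover have "card S = card {x\<in>S. f x = 0} + card {x\<in>S. f x = 1}"
    using \<open>finite S\<close>
    by (subst card_Un_disjoint[symmetric]) (auto intro: arg_cong[where f = card])
  ultimately show ?thesis by simp
qed

lemma card_filter_image: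
  assumes "inj_on f V"
  shows "card {y \<in> f ` V. P y} = card {x \<in> V. P (f x)}"
proof -
  have "{y \<in> f ` V. P y} = f ` {x \<in> V. P (f x)}" by auto
  then show ?thesis
    using assms by (simp add: card_image inj_on_subset)
qed

lemma half_of_pow2: "2 * k = (2::nat) ^ n \<Longrightarrow> k = 2 ^ (n - 1)"
  by (cases n) auto

lemma pow2_pred_lt_twice_diff:
  assumes "0 < s" "s < n - 1"
  shows "(2::nat)^(n-1) < 2 * (2^(n-1) - 2^(s-1))"
proof -
  have "(2::nat)^s < 2^(n-1)"
    using assms by (intro power_strict_increasing) auto
  moreover have "(2::nat)^s = 2 * 2^(s-1)"
    using assms by (simp flip: power_Suc)
  ultimately show ?thesis by linarith
qed

lemma card_add3_lt_if_proper_subset: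
  assumes "L \<subseteq> {1..m}" "M \<subseteq> {1..m}" "N \<subseteq> {1..m}"
    and "L \<noteq> {1..m} \<or> M \<noteq> {1..m} \<or> N \<noteq> {1..m}"
  shows "card L + card M + card N < 3 * m"
proof -
  have le: "card K \<le> m" if "K \<subseteq> {1..m}" for K
    using card_mono[OF _ that] by simp
  have "card K < m" if "K \<subseteq> {1..m}" "K \<noteq> {1..m}" for K
    using that psubset_card_mono[of "{1..m}" K] by auto
  then have "card L < m \<or> card M < m \<or> card N < m"
    using assms by blast
  then show ?thesis
    using le[OF assms(1)] le[OF assms(2)] le[OF assms(3)] by auto
qed

lemma sum_pow2_div_pow2:
  assumes "k < n"
  shows "(\<Sum>i<n. (2::nat) ^ k div 2 ^ i) = 2 ^ Suc k - 1"
proof -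
  have "(\<Sum>i<n. (2::nat) ^ k div 2 ^ i) = (\<Sum>i<Suc k. 2 ^ k div 2 ^ i)"
    using assms by (intro sum.mono_neutral_right) (auto simp: div_less)
  also have "\<dots> = (\<Sum>i<Suc k. 2 ^ (k - i))"
    by (intro sum.cong) (auto simp: power_diff)
  also have "\<dots> = (\<Sum>i<Suc k. 2 ^ i)"
    using sum.nat_diff_reindex[of "\<lambda>i. (2::nat) ^ i" "Suc k"] by simp
  also have "\<dots> = 2 ^ Suc k - 1"
    by (simp add: lessThan_atLeast0 sum_power2)
  finally show ?thesis .
qed

lemma ceiling_pow2_diff_div_pow2:
  assumes "j \<le> k" "i \<le> k"
  shows "\<lceil>real (2 ^ k - 2 ^ j) / 2 ^ i\<rceil> = int (2 ^ k div 2 ^ i) - int (2 ^ j div 2 ^ i)"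
proof -
  have "(2::nat) ^ j \<le> 2 ^ k" and "(2::nat) ^ i dvd 2 ^ k"
    using assms by (simp_all add: le_imp_power_dvd)
  then have "real (2 ^ k - 2 ^ j) / 2 ^ i
      = of_int (int (2 ^ k div 2 ^ i)) - of_nat (2 ^ j) / of_nat (2 ^ i)"
    by (simp add: of_nat_diff real_of_nat_div diff_divide_distrib)
  moreover have "\<lceil>of_int z - y\<rceil> = z - \<lfloor>y\<rfloor>" for z and y :: real
    by (simp add: ceiling_def)
  ultimately show ?thesis
    by (simp only: floor_divide_of_nat_eq)
qed

lemma griesmer_sum_pow2:
  assumes "0 < s" "s < n"
  shows "(\<Sum>i<n. \<lceil>real (2^(n-1) - 2^(s-1)) / 2 ^ i\<rceil>) = int (2^n - 2^s)"
proof -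
  have "(\<Sum>i<n. \<lceil>real (2^(n-1) - 2^(s-1)) / 2 ^ i\<rceil>)
      = (\<Sum>i<n. int (2^(n-1) div 2^i) - int (2^(s-1) div 2^i))"
    using assms by (intro sum.cong refl ceiling_pow2_diff_div_pow2) auto
  also have "\<dots> = int (\<Sum>i<n. 2^(n-1) div 2^i) - int (\<Sum>i<n. 2^(s-1) div 2^i)"
    by (simp add: sum_subtractf)
  also have "\<dots> = int (2^n - 1) - int (2^s - 1)"
    using assms by (simp add: sum_pow2_div_pow2)
  also have "\<dots> = int (2^n - 2^s)"
    using assms by (simp add: of_nat_diff)
  finally show ?thesis .
qed

section \<open>Binary linear codes\<close>

lemma card_UNIV_bit: "card (UNIV :: bit set) = 2"
proof -
  have "card (UNIV :: bit set) = card {0::bit, 1}"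
    by (rule arg_cong[where f = card]) auto
  then show ?thesis by simp
qed

lemma hw_zero [simp]: "hw (\<lambda>x. 0 :: 'f::field) = 0"
  by (simp add: hw_def supp_def)

lemma linear_code_diff:
  fixes C :: "('i \<Rightarrow> bit) set"
  assumes "linear_code X C" "u \<in> C" "v \<in> C"
  shows "u - v \<in> C"
proof -
  have "u - v = (\<lambda>x. u x + v x)" by (simp add: fun_eq_iff)
  then show ?thesis using assms unfolding linear_code_def by simp
qed

lemma hw_eq_card_ones:
  fixes c :: "'i \<Rightarrow> bit"
  assumes "c \<in> vecs X"
  shows "hw c = card {x\<in>X. c x = 1}"
proof -
  have "supp c = {x\<in>X. c x = 1}"
    using assms by (auto simp: supp_def vecs_def)
  then show ?thesis by (simp add: hw_def)
qed

lemma plotkin_bound_binary: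
  fixes C :: "('i \<Rightarrow> bit) set"
  assumes code: "linear_code X C" and "finite C"
    and min_weight: "\<forall>c\<in>C. c \<noteq> (\<lambda>x. 0) \<longrightarrow> d \<le> hw c"
  shows "2 * d * (card C - 1) \<le> card X * card C"
proof -
  have "finite X" and "C \<subseteq> vecs X" and "(\<lambda>x. 0) \<in> C"
    using code by (auto simp: linear_code_def)
  have column: "2 * card {c\<in>C. c x = 1} \<le> card C" for x
  proof (cases "\<exists>a\<in>C. a x = 1")
    case True
    then obtain a where "a \<in> C" "a x = 1" by blast
    then have "2 * card {c\<in>C. c x = 1} = card C"
      using \<open>finite C\<close> linear_code_diff[OF code]
      by (intro card_level_set_half[where S = C and f = "\<lambda>c. c x" and a = a]) auto
    then show ?thesis by simp
  next
    case False
    then have "{c\<in>C. c x = 1} = {}" by auto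
    then show ?thesis by (metis card.empty le0 mult_0_right)
  qed
  have "d * (card C - 1) = (\<Sum>c\<in>C - {\<lambda>x. 0}. d)"
    using \<open>finite C\<close> \<open>(\<lambda>x. 0) \<in> C\<close> by simp
  also have "\<dots> \<le> (\<Sum>c\<in>C - {\<lambda>x. 0}. hw c)"
    using min_weight by (intro sum_mono) auto
  also have "\<dots> \<le> (\<Sum>c\<in>C. hw c)"
    using \<open>finite C\<close> by (intro sum_mono2) auto
  also have "\<dots> = (\<Sum>c\<in>C. card {x\<in>X. c x = 1})"
    using \<open>C \<subseteq> vecs X\<close> hw_eq_card_ones by (intro sum.cong) auto
  also have "\<dots> = (\<Sum>x\<in>X. card {c\<in>C. c x = 1})"
    using \<open>finite C\<close> \<open>finite X\<close> by (intro sum_multicount_gen) auto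
  finally have "2 * (d * (card C - 1)) \<le> (\<Sum>x\<in>X. 2 * card {c\<in>C. c x = 1})"
    by (simp flip: sum_distrib_left)
  also have "\<dots> \<le> (\<Sum>x\<in>X. card C)"
    using column by (intro sum_mono) auto
  finally show ?thesis by simp
qed

lemma minimal_code_if_max_weight_lt_twice_min:
  fixes C :: "('i \<Rightarrow> bit) set"
  assumes code: "linear_code X C"
    and weights: "\<forall>c\<in>C. c \<noteq> (\<lambda>x. 0) \<longrightarrow> d \<le> hw c \<and> hw c \<le> w" and "w < 2 * d"
  shows "minimal_code C"
  unfolding minimal_code_def
proof (intro ballI impI)
  fix c c'
  assume c: "c \<in> C" "c \<noteq> (\<lambda>x. 0)" and c': "c' \<in> C" "c' \<noteq> (\<lambda>x. 0) \<and> supp c' \<subseteq> supp c"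
  have "c \<in> vecs X" and "finite X"
    using code c(1) by (auto simp: linear_code_def)
  then have "supp c \<subseteq> X"
    by (auto simp: vecs_def supp_def)
  then have "finite (supp c)"
    using \<open>finite X\<close> by (rule finite_subset)
  have "c' = c"
  proof (rule ccontr)
    assume "c' \<noteq> c"
    have diff_in_C: "c - c' \<in> C" using linear_code_diff[OF code c(1) c'(1)] .
    have diff_ne_0: "c - c' \<noteq> (\<lambda>x. 0)"
      using \<open>c' \<noteq> c\<close> unfolding zero_fun_def[symmetric] by simp
    have "supp (c - c') = supp c - supp c'"
      using c'(2) by (auto simp: supp_def char2_add_eq_0_iff[OF bit_2_eq_0])
    moreover have "finite (supp c')"
      using c'(2) \<open>finite (supp c)\<close> finite_subset by blast
    ultimately have "hw (c - c') = hw c - hw c'"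
      using c'(2) by (simp add: hw_def card_Diff_subset)
    moreover have "d \<le> hw (c - c')" using weights diff_in_C diff_ne_0 by blast
    moreover have "hw c \<le> w" using weights c by blast
    moreover have "d \<le> hw c'" using weights c' by blast
    ultimately show False using \<open>w < 2 * d\<close> by linarith
  qed
  then show "\<exists>a. c' = (\<lambda>x. a * c x)" by (intro exI[of _ 1]) simp
qed

lemma nkd_two_weight_code_if_weights:
  fixes C :: "('i \<Rightarrow> bit) set"
  assumes "linear_code X C" "card X = n" "card C = 2^k"
    and weights: "\<forall>c\<in>C. c \<noteq> (\<lambda>x. 0) \<longrightarrow> hw c = d \<or> hw c = w"
    and "0 < d" "d < w" "card {c\<in>C. hw c = d} \<noteq> 0" "card {c\<in>C. hw c = w} \<noteq> 0"
  shows "nkd_code X C n k d" "two_weight_code C"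
proof -
  have "{c\<in>C. hw c = d} \<noteq> {}" "{c\<in>C. hw c = w} \<noteq> {}"
    using assms(7,8) by (metis card.empty)+
  then obtain c_d c_w where c_d: "c_d \<in> C" "hw c_d = d" and c_w: "c_w \<in> C" "hw c_w = w"
    by blast
  have nonzero: "c_d \<noteq> (\<lambda>x. 0)" "c_w \<noteq> (\<lambda>x. 0)"
    using c_d(2) c_w(2) \<open>0 < d\<close> \<open>d < w\<close> by auto
  show "nkd_code X C n k d"
    unfolding nkd_code_def card_UNIV_bit
    using assms c_d nonzero by auto
  have "{hw c | c. c \<in> C \<and> c \<noteq> (\<lambda>x. 0)} = {d, w}"
    using weights c_d c_w nonzero by blast
  then show "two_weight_code C"
    using \<open>d < w\<close> by (simp add: two_weight_code_def)
qed

lemma griesmer_code_binary_pow2_params: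
  fixes C :: "('i \<Rightarrow> bit) set"
  assumes "nkd_code X C (2^n - 2^s) n (2^(n-1) - 2^(s-1))" "0 < s" "s < n"
  shows "griesmer_code X C"
proof -
  have "(\<Sum>i<n. \<lceil>real (2^(n-1) - 2^(s-1)) / real (card (UNIV :: bit set)) ^ i\<rceil>)
      = int (2^n - 2^s)"
    unfolding card_UNIV_bit of_nat_numeral by (rule griesmer_sum_pow2[OF assms(2,3)])
  then show ?thesis
    unfolding griesmer_code_def using assms(1) by blast
qed

lemma distance_optimal_binary_pow2_params:
  fixes C :: "('i \<Rightarrow> bit) set"
  assumes code: "nkd_code X C (2^n - 2^s) n (2^(n-1) - 2^(s-1))" and "0 < s" "s < n"
  shows "distance_optimal X C"
  unfolding distance_optimal_def
proof (intro exI conjI notI)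
  show "nkd_code X C (2^n - 2^s) n (2^(n-1) - 2^(s-1))" by (rule code)
  assume "\<exists>C' :: (nat \<Rightarrow> bit) set.
    nkd_code {..<2^n - 2^s} C' (2^n - 2^s) n (2^(n-1) - 2^(s-1) + 1)"
  then obtain C' :: "(nat \<Rightarrow> bit) set"
    where C': "nkd_code {..<2^n - 2^s} C' (2^n - 2^s) n (2^(n-1) - 2^(s-1) + 1)" by blast
  then have code': "linear_code {..<2^n - 2^s} C'" and card_C': "card C' = 2^n"
    and weights': "\<forall>c\<in>C'. c \<noteq> (\<lambda>x. 0) \<longrightarrow> 2^(n-1) - 2^(s-1) + 1 \<le> hw c"
    unfolding nkd_code_def card_UNIV_bit by auto
  have "finite C'" using card_C' by (intro card_ge_0_finite) simp
  from plotkin_bound_binary[OF code' this weights']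
  have "2 * (2^(n-1) - 2^(s-1) + 1) * (2^n - 1) \<le> (2^n - 2^s) * (2::nat)^n"
    unfolding card_C' card_lessThan .
  moreover obtain q where "(2::nat)^(s-1) = Suc q"
    using not0_implies_Suc by (metis power_not_zero zero_neq_numeral)
  moreover have "(2::nat)^(s-1) \<le> 2^(n-1)"
    using assms by (intro power_increasing) auto
  then obtain r where "(2::nat)^(n-1) = 2^(s-1) + r"
    by (auto simp: le_iff_add)
  moreover have "(2::nat)^n = 2 * 2^(n-1)" "(2::nat)^s = 2 * 2^(s-1)"
    using assms by (simp_all flip: power_Suc)
  ultimately show False
    \<comment> \<open>the left-hand side exceeds the right-hand side by \<open>2 (2^(n-1) + 2^(s-1) - 1)\<close>\<close>
    by (simp add: algebra_simps)
qed

section \<open>The defining set\<close>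

lemma F2vec_eq_Delta: "F2vec m = Delta m {1..m}"
  by (auto simp: Delta_def F2vec_def)

lemma Delta_mono: "L \<subseteq> L' \<Longrightarrow> Delta m L \<subseteq> Delta m L'"
  by (auto simp: Delta_def)

lemma mem_Delta_iff: "w \<in> Delta m L \<longleftrightarrow> (\<forall>i. i \<notin> L \<inter> {1..m} \<longrightarrow> w i = 0)"
  unfolding Delta_def F2vec_def by blast

lemma zero_in_Delta: "0 \<in> Delta m L"
  by (simp add: mem_Delta_iff)

lemma diff_in_Delta: "v \<in> Delta m L \<Longrightarrow> w \<in> Delta m L \<Longrightarrow> v - w \<in> Delta m L"
  by (simp add: mem_Delta_iff)

lemma add_in_Delta: "v \<in> Delta m L \<Longrightarrow> w \<in> Delta m L \<Longrightarrow> v + w \<in> Delta m L"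
  by (simp add: mem_Delta_iff)

lemma card_Delta:
  assumes "L \<subseteq> {1..m}"
  shows "card (Delta m L) = 2 ^ card L"
proof -
  have "finite L" using assms finite_subset by blast
  have "bij_betw (\<lambda>w. restrict w L) (Delta m L) (L \<rightarrow>\<^sub>E (UNIV :: bit set))"
    by (rule bij_betw_byWitness[where f'="\<lambda>g i. if i \<in> L then g i else 0"])
      (use assms in \<open>auto simp: Delta_def F2vec_def PiE_def extensional_def fun_eq_iff
        split: if_splits\<close>)
  then have "card (Delta m L) = card (L \<rightarrow>\<^sub>E (UNIV :: bit set))"
    by (rule bij_betw_same_card)
  also have "\<dots> = 2 ^ card L"
    using \<open>finite L\<close> by (simp add: card_PiE card_UNIV_bit)
  finally show ?thesis .
qed

lemma finite_Delta: "finite (Delta m L)"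
proof -
  have "Delta m L \<subseteq> Delta m {1..m}" by (auto simp: Delta_def F2vec_def)
  moreover have "finite (Delta m {1..m})"
    using card_Delta[of "{1..m}" m] by (intro card_ge_0_finite) simp
  ultimately show ?thesis by (rule finite_subset)
qed

lemma Delta_empty: "Delta m {} = {0}"
  by (auto simp: Delta_def F2vec_def fun_eq_iff)

type_synonym bvec3 = "(nat \<Rightarrow> bit) \<times> (nat \<Rightarrow> bit) \<times> (nat \<Rightarrow> bit)"

text \<open>Triples are ordered \<open>(a, c, b)\<close> as in \<^const>\<open>Dcomp2\<close>, so the middle factor is \<open>\<Delta>\<^sub>N\<close>.\<close>

definition Delta3 :: "nat \<Rightarrow> nat set \<Rightarrow> nat set \<Rightarrow> nat set \<Rightarrow> bvec3 set" where
  "Delta3 m L N M = Delta m L \<times> Delta m N \<times> Delta m M"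

lemma Delta3_mono:
  "L \<subseteq> L' \<Longrightarrow> N \<subseteq> N' \<Longrightarrow> M \<subseteq> M' \<Longrightarrow> Delta3 m L N M \<subseteq> Delta3 m L' N' M'"
  unfolding Delta3_def using Delta_mono by blast

lemma zero_in_Delta3: "0 \<in> Delta3 m L N M"
  by (simp add: Delta3_def zero_prod_def zero_in_Delta)

lemma diff_in_Delta3: "u \<in> Delta3 m L N M \<Longrightarrow> v \<in> Delta3 m L N M \<Longrightarrow> u - v \<in> Delta3 m L N M"
  by (auto simp: Delta3_def diff_in_Delta)

lemma add_in_Delta3: "u \<in> Delta3 m L N M \<Longrightarrow> v \<in> Delta3 m L N M \<Longrightarrow> u + v \<in> Delta3 m L N M"
  by (auto simp: Delta3_def add_in_Delta)

lemma finite_Delta3: "finite (Delta3 m L N M)"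
  by (simp add: Delta3_def finite_Delta)

lemma card_Delta3:
  "L \<subseteq> {1..m} \<Longrightarrow> N \<subseteq> {1..m} \<Longrightarrow> M \<subseteq> {1..m}
    \<Longrightarrow> card (Delta3 m L N M) = 2 ^ (card L + card N + card M)"
  by (simp add: Delta3_def card_cartesian_product card_Delta power_add)

lemma card_Delta3_complement:
  assumes "L \<subseteq> {1..m}" "N \<subseteq> {1..m}" "M \<subseteq> {1..m}"
  shows "card (Delta3 m ({1..m} - L) ({1..m} - N) ({1..m} - M)) = 2 ^ (3*m - (card L + card N + card M))"
proof -
  have "card ({1..m} - L) + card ({1..m} - N) + card ({1..m} - M) = 3*m - (card L + card N + card M)"
    using assms card_mono[OF _ assms(1)] card_mono[OF _ assms(2)] card_mono[OF _ assms(3)]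
    by (simp add: card_Diff_subset finite_subset)
  then show ?thesis by (simp add: card_Delta3)
qed

lemma Delta3_empty: "Delta3 m {} {} {} = {0}"
  by (simp add: Delta3_def Delta_empty zero_prod_def)

lemma comb_eq_iff:
  fixes \<omega> :: "'a::field"
  assumes char2: "(2::'a) = 0" and root: "\<omega>^3 + \<omega> + 1 = 0"
  shows "comb \<omega> a b c = comb \<omega> a' b' c' \<longleftrightarrow> a = a' \<and> b = b' \<and> c = c'"
proof
  assume eq: "comb \<omega> a b c = comb \<omega> a' b' c'"
  have "a i = a' i \<and> b i = b' i \<and> c i = c' i" for i
  proof -
    have "of_bit (a i + a' i) + \<omega> * of_bit (b i + b' i) + \<omega>^2 * of_bit (c i + c' i)
        = comb \<omega> a b c i + comb \<omega> a' b' c' i"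
      unfolding of_bit_add[OF char2] comb_def by (simp add: algebra_simps)
    also have "\<dots> = 0"
      unfolding eq by (simp only: char2_add_eq_0_iff[OF char2])
    finally have "a i + a' i = 0 \<and> b i + b' i = 0 \<and> c i + c' i = 0"
      by (rule F2_independent_root_powers[OF char2 root])
    then show ?thesis by (simp add: char2_add_eq_0_iff[OF bit_2_eq_0])
  qed
  then show "a = a' \<and> b = b' \<and> c = c'" by auto
qed simp

lemma Dcomp2_eq:
  fixes \<omega> :: "'a::field"
  assumes "(2::'a) = 0" and "\<omega>^3 + \<omega> + 1 = 0"
  shows "Dcomp2 \<omega> m L M N = Delta3 m {1..m} {1..m} {1..m} - Delta3 m L N M"
proof -
  have comb_in_Dset:
    "comb \<omega> a b c \<in> Dset \<omega> m L M N \<longleftrightarrow> a \<in> Delta m L \<and> b \<in> Delta m M \<and> c \<in> Delta m N" for a b c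
    unfolding Dset_def by (auto simp: comb_eq_iff[OF assms])
  have comb_in_Fvec: "comb \<omega> a b c \<in> Fvec m"
    if "a \<in> F2vec m" "b \<in> F2vec m" "c \<in> F2vec m" for a b c
    using that by (auto simp: F2vec_def Fvec_def comb_def)
  show ?thesis
    unfolding Dcomp2_def Dcomp_def Delta3_def F2vec_eq_Delta[symmetric]
    using comb_in_Dset comb_in_Fvec Delta_mono[of _ "{1..m}" m]
    by (auto simp: F2vec_eq_Delta)
qed

section \<open>The inner product\<close>

lemma dot3_add_left: "dot3 m (u + v) x = dot3 m u x + dot3 m v x"
  by (cases u; cases v; cases x) (simp add: dot3_def sum.distrib[symmetric] algebra_simps)

lemma dot3_diff_left: "dot3 m (u - v) x = dot3 m u x - dot3 m v x"
  by (cases u; cases v; cases x) (simp add: dot3_def sum.distrib[symmetric] algebra_simps)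

lemma dot3_add_right: "dot3 m u (x + y) = dot3 m u x + dot3 m u y"
  by (cases u; cases x; cases y) (simp add: dot3_def sum.distrib[symmetric] algebra_simps)

lemma dot3_zero_left [simp]: "dot3 m 0 x = 0"
  by (cases x) (simp add: dot3_def zero_prod_def)

lemma mult_eq_0_if_in_Delta_complement:
  "\<alpha> \<in> Delta m ({1..m} - L) \<Longrightarrow> a \<in> Delta m L \<Longrightarrow> \<alpha> i * a i = 0"
  by (cases "i \<in> L") (auto simp: mem_Delta_iff)

lemma dot3_vanishes_on_Delta3_iff:
  assumes L: "L \<subseteq> {1..m}" and N: "N \<subseteq> {1..m}" and M: "M \<subseteq> {1..m}"
    and u: "u \<in> Delta3 m {1..m} {1..m} {1..m}"
  shows "(\<forall>x\<in>Delta3 m L N M. dot3 m u x = 0)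
    \<longleftrightarrow> u \<in> Delta3 m ({1..m} - L) ({1..m} - N) ({1..m} - M)"
proof -
  obtain \<alpha> \<beta> \<gamma> where u_eq: "u = (\<alpha>, \<beta>, \<gamma>)" by (cases u)
  define e where "e i = (\<lambda>j. if j = i then 1 else 0 :: bit)" for i :: nat
  have e_in_Delta: "e i \<in> Delta m K" if "i \<in> K" "K \<subseteq> {1..m}" for i K
    using that by (auto simp: mem_Delta_iff e_def)
  have dot3_e: "dot3 m (\<alpha>, \<beta>, \<gamma>) (e i, 0, 0) = \<alpha> i"
               "dot3 m (\<alpha>, \<beta>, \<gamma>) (0, e i, 0) = \<beta> i"
               "dot3 m (\<alpha>, \<beta>, \<gamma>) (0, 0, e i) = \<gamma> i" if "i \<in> {1..m}" for i
    using that by (simp_all add: dot3_def e_def if_distrib[where f = "\<lambda>x. _ * x"] cong: if_cong)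
  show ?thesis
  proof
    assume vanish: "\<forall>x\<in>Delta3 m L N M. dot3 m u x = 0"
    have "\<alpha> i = 0" if "i \<in> L" for i
      using vanish[rule_format, of "(e i, 0, 0)"] that L dot3_e(1)[of i]
      by (auto simp: u_eq Delta3_def e_in_Delta zero_in_Delta)
    moreover have "\<beta> i = 0" if "i \<in> N" for i
      using vanish[rule_format, of "(0, e i, 0)"] that N dot3_e(2)[of i]
      by (auto simp: u_eq Delta3_def e_in_Delta zero_in_Delta)
    moreover have "\<gamma> i = 0" if "i \<in> M" for i
      using vanish[rule_format, of "(0, 0, e i)"] that M dot3_e(3)[of i]
      by (auto simp: u_eq Delta3_def e_in_Delta zero_in_Delta)
    ultimately show "u \<in> Delta3 m ({1..m} - L) ({1..m} - N) ({1..m} - M)"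
      using u by (auto simp: u_eq Delta3_def mem_Delta_iff)
  next
    assume "u \<in> Delta3 m ({1..m} - L) ({1..m} - N) ({1..m} - M)"
    then show "\<forall>x\<in>Delta3 m L N M. dot3 m u x = 0"
      by (auto simp: u_eq Delta3_def dot3_def mult_eq_0_if_in_Delta_complement)
  qed
qed

lemma card_dot3_eq_1:
  assumes "\<exists>x\<in>Delta3 m L N M. dot3 m u x \<noteq> 0"
  shows "2 * card {x\<in>Delta3 m L N M. dot3 m u x = 1} = card (Delta3 m L N M)"
  using assms
  by (auto intro!: card_level_set_half finite_Delta3 diff_in_Delta3 dot3_add_right)

section \<open>Weights of the code\<close>

definition codeword :: "bvec3 set \<Rightarrow> nat \<Rightarrow> bvec3 \<Rightarrow> bvec3 \<Rightarrow> bit" where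
  "codeword X m u = (\<lambda>x. if x \<in> X then dot3 m u x else 0)"

lemma code2_eq_image:
  "code2 \<omega> m L M N = codeword (Dcomp2 \<omega> m L M N) m ` Delta3 m {1..m} {1..m} {1..m}"
  unfolding code2_def codeword_def Delta3_def F2vec_eq_Delta by auto

lemma codeword_zero: "codeword X m 0 = (\<lambda>x. 0)"
  by (simp add: codeword_def fun_eq_iff)

lemma codeword_add: "codeword X m (u + v) = codeword X m u + codeword X m v"
  by (simp add: codeword_def fun_eq_iff dot3_add_left)

lemma codeword_diff: "codeword X m (u - v) = codeword X m u - codeword X m v"
  by (simp add: codeword_def fun_eq_iff dot3_diff_left)

lemma linear_code_codeword_image:
  assumes "finite X" and "0 \<in> V"
    and add_closed: "\<And>u v. u \<in> V \<Longrightarrow> v \<in> V \<Longrightarrow> u + v \<in> V"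
  shows "linear_code X (codeword X m ` V)"
  unfolding linear_code_def
proof (intro conjI ballI allI)
  show "finite X" by fact
  show "codeword X m ` V \<subseteq> vecs X" by (auto simp: vecs_def codeword_def)
  show "(\<lambda>x. 0) \<in> codeword X m ` V"
    using \<open>0 \<in> V\<close> codeword_zero by (metis image_eqI)
  fix c c' assume "c \<in> codeword X m ` V" "c' \<in> codeword X m ` V"
  then obtain u v where "u \<in> V" "v \<in> V" "c = codeword X m u" "c' = codeword X m v" by blast
  then have "(\<lambda>x. c x + c' x) = codeword X m (u + v)"
    by (simp add: codeword_add fun_eq_iff)
  then show "(\<lambda>x. c x + c' x) \<in> codeword X m ` V"
    using add_closed \<open>u \<in> V\<close> \<open>v \<in> V\<close> by blast
next
  fix a :: bit and c assume "c \<in> codeword X m ` V"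
  moreover have "(\<lambda>x. 0) \<in> codeword X m ` V"
    using \<open>0 \<in> V\<close> codeword_zero by (metis image_eqI)
  ultimately show "(\<lambda>x. a * c x) \<in> codeword X m ` V" by (cases a) simp_all
qed

lemma inj_on_codeword:
  assumes diff_closed: "\<And>u v. u \<in> V \<Longrightarrow> v \<in> V \<Longrightarrow> u - v \<in> V"
    and kernel: "\<And>u. u \<in> V \<Longrightarrow> codeword X m u = (\<lambda>x. 0) \<Longrightarrow> u = 0"
  shows "inj_on (codeword X m) V"
proof (rule inj_onI)
  fix u v assume "u \<in> V" "v \<in> V" "codeword X m u = codeword X m v"
  then have "codeword X m (u - v) = (\<lambda>x. 0)"
    by (simp add: codeword_diff zero_fun_def[symmetric])
  then show "u = v" using kernel diff_closed \<open>u \<in> V\<close> \<open>v \<in> V\<close> by fastforce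
qed

lemma hw_codeword_diff:
  assumes "W \<subseteq> V" "finite W"
  shows "hw (codeword (V - W) m u)
    = card {x\<in>V. dot3 m u x = 1} - card {x\<in>W. dot3 m u x = 1}"
proof -
  have "supp (codeword (V - W) m u) = {x\<in>V. dot3 m u x = 1} - {x\<in>W. dot3 m u x = 1}"
    using assms by (auto simp: supp_def codeword_def)
  moreover have "{x\<in>W. dot3 m u x = 1} \<subseteq> {x\<in>V. dot3 m u x = 1}" using assms by auto
  ultimately show ?thesis
    using \<open>finite W\<close> by (simp add: hw_def card_Diff_subset)
qed

lemma hw_codeword_Dcomp2:
  fixes \<omega> :: "'a::field"
  assumes char2: "(2::'a) = 0" and root: "\<omega>^3 + \<omega> + 1 = 0"
    and L: "L \<subseteq> {1..m}" and M: "M \<subseteq> {1..m}" and N: "N \<subseteq> {1..m}"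
    and u: "u \<in> Delta3 m {1..m} {1..m} {1..m}"
  shows "hw (codeword (Dcomp2 \<omega> m L M N) m u) =
    (if u = 0 then 0
     else if u \<in> Delta3 m ({1..m} - L) ({1..m} - N) ({1..m} - M) then 2^(3*m-1)
     else 2^(3*m-1) - 2^(card L + card M + card N - 1))"
proof -
  define V W where "V = Delta3 m {1..m} {1..m} {1..m}" and "W = Delta3 m L N M"
  have "W \<subseteq> V" using L M N by (simp add: V_def W_def Delta3_mono)
  have hw_eq: "hw (codeword (Dcomp2 \<omega> m L M N) m u)
      = card {x\<in>V. dot3 m u x = 1} - card {x\<in>W. dot3 m u x = 1}"
    unfolding Dcomp2_eq[OF char2 root] V_def[symmetric] W_def[symmetric]
    by (rule hw_codeword_diff[OF \<open>W \<subseteq> V\<close>]) (simp add: W_def finite_Delta3)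
  show ?thesis
  proof (cases "u = 0")
    case True
    then show ?thesis using hw_eq by simp
  next
    case u_ne_0: False
    have "\<not> (\<forall>x\<in>V. dot3 m u x = 0)"
      using dot3_vanishes_on_Delta3_iff[of "{1..m}" m "{1..m}" "{1..m}" u] u u_ne_0
      by (simp add: V_def Delta3_empty)
    then have "2 * card {x\<in>V. dot3 m u x = 1} = 2^(3*m)"
      using card_dot3_eq_1 card_Delta3[of "{1..m}" m "{1..m}" "{1..m}"]
      by (auto simp: V_def)
    then have V_half: "card {x\<in>V. dot3 m u x = 1} = 2^(3*m-1)"
      by (rule half_of_pow2)
    show ?thesis
    proof (cases "u \<in> Delta3 m ({1..m} - L) ({1..m} - N) ({1..m} - M)")
      case True
      then have "{x\<in>W. dot3 m u x = 1} = {}"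
        using dot3_vanishes_on_Delta3_iff[OF L N M u] by (auto simp: W_def)
      then have "card {x\<in>W. dot3 m u x = 1} = 0" by (simp only: card.empty)
      then show ?thesis using hw_eq V_half True u_ne_0 by simp
    next
      case False
      then have "\<not> (\<forall>x\<in>W. dot3 m u x = 0)"
        using dot3_vanishes_on_Delta3_iff[OF L N M u] by (simp add: W_def)
      then have "2 * card {x\<in>W. dot3 m u x = 1} = 2^(card L + card M + card N)"
        using card_dot3_eq_1 card_Delta3[OF L N M] by (auto simp: W_def ac_simps)
      then have "card {x\<in>W. dot3 m u x = 1} = 2^(card L + card M + card N - 1)"
        by (rule half_of_pow2)
      then show ?thesis using hw_eq V_half False u_ne_0 by simp
    qed
  qed
qed

lemma code2_weight_distribution:
  fixes \<omega> :: "'a::field" and m :: nat and L M N :: "nat set"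
  defines "s \<equiv> card L + card M + card N"
    and "X \<equiv> Dcomp2 \<omega> m L M N" and "C \<equiv> code2 \<omega> m L M N"
  defines "d \<equiv> 2^(3*m-1) - 2^(s-1)" and "w \<equiv> 2^(3*m-1)"
  assumes char2: "(2::'a) = 0" and root: "\<omega>^3 + \<omega> + 1 = 0"
    and L: "L \<subseteq> {1..m}" and M: "M \<subseteq> {1..m}" and N: "N \<subseteq> {1..m}"
    and "0 < s" "s < 3*m"
  shows "linear_code X C" "card X = 2^(3*m) - 2^s" "card C = 2^(3*m)"
    "\<forall>c\<in>C. c \<noteq> (\<lambda>x. 0) \<longrightarrow> hw c = d \<or> hw c = w"
    "card {c\<in>C. hw c = 0} = 1"
    "card {c\<in>C. hw c = d} = 2^(3*m-s) * (2^s - 1)"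
    "card {c\<in>C. hw c = w} = 2^(3*m-s) - 1"
proof -
  define V W A where "V = Delta3 m {1..m} {1..m} {1..m}" and "W = Delta3 m L N M"
    and "A = Delta3 m ({1..m} - L) ({1..m} - N) ({1..m} - M)"
  define wt where "wt u = (if u = 0 then 0 else if u \<in> A then w else d)" for u
  have weight: "hw (codeword X m u) = wt u" if "u \<in> V" for u
    using hw_codeword_Dcomp2[OF char2 root L M N that[unfolded V_def]]
    by (simp add: wt_def X_def A_def d_def w_def s_def)
  have "(2::nat)^(s-1) < 2^(3*m-1)"
    using \<open>0 < s\<close> \<open>s < 3*m\<close> by (intro power_strict_increasing) auto
  then have "0 < d" "d < w" by (simp_all add: d_def w_def)
  have card_V: "card V = 2^(3*m)"
    using card_Delta3[of "{1..m}" m "{1..m}" "{1..m}"] by (simp add: V_def)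
  have card_W: "card W = 2^s"
    using card_Delta3[OF L N M] by (simp add: W_def s_def ac_simps)
  have card_A: "card A = 2^(3*m-s)"
    using card_Delta3_complement[OF L N M] by (simp add: A_def s_def ac_simps)
  have "W \<subseteq> V" using L M N by (simp add: V_def W_def Delta3_mono)
  have "A \<subseteq> V" by (simp add: V_def A_def Delta3_mono Diff_subset)
  have "0 \<in> A" by (simp add: A_def zero_in_Delta3)
  have X_eq: "X = V - W" by (simp add: X_def V_def W_def Dcomp2_eq[OF char2 root])
  have C_eq: "C = codeword X m ` V" by (simp add: C_def X_def V_def code2_eq_image)
  have inj: "inj_on (codeword X m) V"
  proof (rule inj_on_codeword)
    show "u - v \<in> V" if "u \<in> V" "v \<in> V" for u v
      using that by (simp add: V_def diff_in_Delta3)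
    show "u = 0" if "u \<in> V" "codeword X m u = (\<lambda>x. 0)" for u
      using weight[OF that(1)] that(2) \<open>0 < d\<close> \<open>d < w\<close>
      by (auto simp: wt_def hw_def supp_def split: if_splits)
  qed
  have count: "card {c\<in>C. hw c = k} = card {u\<in>V. wt u = k}" for k
    unfolding C_eq card_filter_image[OF inj] using weight by (metis (mono_tags, lifting))
  have "{u\<in>V. wt u = 0} = {0}" "{u\<in>V. wt u = d} = V - A" "{u\<in>V. wt u = w} = A - {0}"
    using \<open>A \<subseteq> V\<close> \<open>0 \<in> A\<close> \<open>0 < d\<close> \<open>d < w\<close> by (auto simp: wt_def)
  moreover have "card (V - A) = 2^(3*m-s) * (2^s - 1)"
  proof -
    have "card (V - A) = 2^(3*m) - 2^(3*m-s)"
      using \<open>A \<subseteq> V\<close> card_V card_A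
      by (simp add: card_Diff_subset finite_subset V_def finite_Delta3)
    also have "\<dots> = 2^(3*m-s) * (2^s - 1)"
      using \<open>s < 3*m\<close> by (simp add: diff_mult_distrib2 flip: power_add)
    finally show ?thesis .
  qed
  ultimately show "card {c\<in>C. hw c = 0} = 1"
    "card {c\<in>C. hw c = d} = 2^(3*m-s) * (2^s - 1)"
    "card {c\<in>C. hw c = w} = 2^(3*m-s) - 1"
    using count card_A \<open>0 \<in> A\<close> \<open>A \<subseteq> V\<close> by (simp_all add: finite_subset V_def finite_Delta3)
  show "linear_code X C"
    unfolding C_eq using X_eq
    by (intro linear_code_codeword_image)
      (auto simp: V_def zero_in_Delta3 add_in_Delta3 finite_Delta3)
  show "card X = 2^(3*m) - 2^s"
    using \<open>W \<subseteq> V\<close> card_V card_W by (simp add: X_eq card_Diff_subset W_def finite_Delta3)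
  show "card C = 2^(3*m)"
    using card_V by (simp add: C_eq card_image[OF inj])
  show "\<forall>c\<in>C. c \<noteq> (\<lambda>x. 0) \<longrightarrow> hw c = d \<or> hw c = w"
    using weight codeword_zero by (auto simp: C_eq wt_def)
qed

theorem mainTheorem10:
  fixes \<omega> :: "'a::{field, finite}" and m :: nat and L M N :: "nat set"
  assumes card8: "card (UNIV :: 'a set) = 8"
    and root: "\<omega>^3 + \<omega> + 1 = 0"
    and L: "L \<noteq> {}" "L \<subseteq> {1..m}"
    and M: "M \<noteq> {}" "M \<subseteq> {1..m}"
    and N: "N \<noteq> {}" "N \<subseteq> {1..m}"
    and proper: "L \<noteq> {1..m} \<or> M \<noteq> {1..m} \<or> N \<noteq> {1..m}"
  defines "s \<equiv> card L + card M + card N"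
    and "X \<equiv> Dcomp2 \<omega> m L M N"
    and "C \<equiv> code2 \<omega> m L M N"
  shows "nkd_code X C (2^(3*m) - 2^s) (3*m) (2^(3*m-1) - 2^(s-1))
    \<and> two_weight_code C
    \<and> card {c \<in> C. hw c = 0} = 1
    \<and> card {c \<in> C. hw c = 2^(3*m-1) - 2^(s-1)} = 2^(3*m-s) * (2^s - 1)
    \<and> card {c \<in> C. hw c = 2^(3*m-1)} = 2^(3*m-s) - 1
    \<and> griesmer_code X C
    \<and> distance_optimal X C
    \<and> (s \<le> 3*m - 2 \<longrightarrow> minimal_code C)"
proof -
  have char2: "(2::'a) = 0"
    using card8 by (intro two_eq_zero_if_card_eq_power_of_two[of 3]) simp
  have "0 < s"
    using L M N finite_subset by (fastforce simp: s_def card_gt_0_iff)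
  have "s < 3*m"
    unfolding s_def using card_add3_lt_if_proper_subset[OF L(2) M(2) N(2) proper] .
  note distribution = code2_weight_distribution[OF char2 root L(2) M(2) N(2),
      folded s_def X_def C_def, OF \<open>0 < s\<close> \<open>s < 3*m\<close>]
  have "(2::nat)^(s-1) < 2^(3*m-1)"
    using \<open>0 < s\<close> \<open>s < 3*m\<close> by (intro power_strict_increasing) auto
  moreover have "(1::nat) < 2^s" using \<open>0 < s\<close> by (rule one_less_power[rotated]) simp
  moreover have "(1::nat) < 2^(3*m-s)" using \<open>s < 3*m\<close> by (intro one_less_power) simp_all
  ultimately have nkd: "nkd_code X C (2^(3*m) - 2^s) (3*m) (2^(3*m-1) - 2^(s-1))"
    and two_weight: "two_weight_code C"
    using nkd_two_weight_code_if_weights[OF distribution(1-4)] distribution(6,7) by auto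
  have "minimal_code C" if "s \<le> 3*m - 2"
  proof (rule minimal_code_if_max_weight_lt_twice_min[OF distribution(1)])
    show "\<forall>c\<in>C. c \<noteq> (\<lambda>x. 0) \<longrightarrow> 2^(3*m-1) - 2^(s-1) \<le> hw c \<and> hw c \<le> 2^(3*m-1)"
      using distribution(4) by auto
    show "2^(3*m-1) < 2 * (2^(3*m-1) - 2^(s-1) :: nat)"
      using that \<open>0 < s\<close> by (intro pow2_pred_lt_twice_diff) auto
  qed
  then show ?thesis
    using nkd two_weight distribution(5-7) \<open>0 < s\<close> \<open>s < 3*m\<close>
      griesmer_code_binary_pow2_params distance_optimal_binary_pow2_params
    by blast
qed

end
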